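(* Let $F \in \mathbb{C}^{n \times n}$ be a unitary matrix and let $y = F\hat{x} + e$, where $\hat{x} \in \mathbb{C}^{n}$ is $k$-sparse and $e \in \mathbb{C}^{n}$. If $\|e\|_{\infty} \leq \eta_1$ and $\|F^*e\|_{\infty} \leq \eta_{2}$, then any solution $x^{\#}$ of the modified Dantzig Selector problem $$\min_{z \in \mathbb{C}^{n}}\|z\|_1 \quad \text{subject to} \quad \|F^*(y - Fz)\|_\infty \leq \eta_2, \quad \|Fz - y\|_\infty \leq \eta_1$$ satisfies $$\| x^{\#}-\hat{x}\|_1 \leq 4k\eta_2 \quad\text{and}\quad \| x^{\#}-\hat{x}\|_2 \leq 6\sqrt{k}\,\eta_2 .$$
   Context: A vector is $k$-sparse if it has at most $k$ nonzero entries. $F^*$ denotes the conjugate transpose of $F$. *)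

theory Defs
  imports "HOL-Analysis.Analysis"
begin

definition conj_transpose :: "complex ^ 'n ^ 'm \<Rightarrow> complex ^ 'm ^ 'n" where
  "conj_transpose A = (\<chi> i j. cnj (A $ j $ i))"

definition unitary :: "complex ^ 'n ^ 'n \<Rightarrow> bool" where
  "unitary F \<longleftrightarrow> conj_transpose F ** F = mat 1 \<and> F ** conj_transpose F = mat 1"

definition norm1 :: "complex ^ 'n \<Rightarrow> real" where
  "norm1 x = (\<Sum>i\<in>UNIV. cmod (x $ i))"

definition norm2 :: "complex ^ 'n \<Rightarrow> real" where
  "norm2 x = sqrt (\<Sum>i\<in>UNIV. (cmod (x $ i))^2)"

definition norm_inf :: "complex ^ 'n \<Rightarrow> real" where
  "norm_inf x = Max (range (\<lambda>i. cmod (x $ i)))"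

definition sparse :: "nat \<Rightarrow> complex ^ 'n \<Rightarrow> bool" where
  "sparse k x \<longleftrightarrow> card {i. x $ i \<noteq> 0} \<le> k"

definition dantzig_feasible ::
  "complex ^ 'n ^ 'n \<Rightarrow> complex ^ 'n \<Rightarrow> real \<Rightarrow> real \<Rightarrow> complex ^ 'n \<Rightarrow> bool" where
  "dantzig_feasible F y \<eta>1 \<eta>2 z \<longleftrightarrow>
     norm_inf (conj_transpose F *v (y - F *v z)) \<le> \<eta>2 \<and> norm_inf (F *v z - y) \<le> \<eta>1"

definition dantzig_solution ::
  "complex ^ 'n ^ 'n \<Rightarrow> complex ^ 'n \<Rightarrow> real \<Rightarrow> real \<Rightarrow> complex ^ 'n \<Rightarrow> bool" where
  "dantzig_solution F y \<eta>1 \<eta>2 x \<longleftrightarrow>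
     dantzig_feasible F y \<eta>1 \<eta>2 x \<and>
     (\<forall>z. dantzig_feasible F y \<eta>1 \<eta>2 z \<longrightarrow> norm1 x \<le> norm1 z)"

end

theory Submission
  imports Defs
begin

text \<open>
  The true signal \<open>xhat\<close> is feasible for the Dantzig problem, so the minimiser satisfies
  \<open>\<parallel>xs\<parallel>\<^sub>1 \<le> \<parallel>xhat\<parallel>\<^sub>1\<close>, which forces the error \<open>h = xs - xhat\<close> into the cone
  \<open>\<parallel>h\<^sub>S\<^sub>c\<parallel>\<^sub>1 \<le> \<parallel>h\<^sub>S\<parallel>\<^sub>1\<close>, where \<open>S\<close> is the support of \<open>xhat\<close>. Since \<open>F\<close> is unitary,
  \<open>F\<^sup>*(y - F xs) = F\<^sup>*e - h\<close>, so both \<open>F\<^sup>*e\<close> and \<open>F\<^sup>*e - h\<close> being bounded by \<open>\<eta>\<^sub>2\<close> gives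
  \<open>\<parallel>h\<parallel>\<^sub>\<infinity> \<le> 2\<eta>\<^sub>2\<close>. Hence \<open>\<parallel>h\<parallel>\<^sub>1 \<le> 2\<parallel>h\<^sub>S\<parallel>\<^sub>1 \<le> 4k\<eta>\<^sub>2\<close>, and
  \<open>\<parallel>h\<parallel>\<^sub>2\<^sup>2 \<le> \<parallel>h\<parallel>\<^sub>\<infinity>\<parallel>h\<parallel>\<^sub>1 \<le> 8k\<eta>\<^sub>2\<^sup>2\<close>.
\<close>

lemma norm_inf_ge: "cmod (x $ i) \<le> norm_inf x"
  unfolding norm_inf_def by (rule Max_ge) auto

lemma norm_inf_le_iff: "norm_inf x \<le> c \<longleftrightarrow> (\<forall>i. cmod (x $ i) \<le> c)"
  unfolding norm_inf_def by (auto simp: Max_le_iff)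

lemma norm_inf_nonneg: "0 \<le> norm_inf x"
  using norm_inf_ge[of x] norm_ge_zero order_trans by blast

lemma norm_inf_uminus [simp]: "norm_inf (- x) = norm_inf x"
  unfolding norm_inf_def by simp

lemma unitary_conj_transpose_mult_cancel:
  assumes "unitary F"
  shows "conj_transpose F *v (F *v v) = v"
  using assms unfolding unitary_def
  by (metis matrix_vector_mul_assoc matrix_vector_mul_lid)

lemma norm1_split:
  "norm1 x = (\<Sum>i\<in>S. cmod (x $ i)) + (\<Sum>i\<in>-S. cmod (x $ i))"
  unfolding norm1_def
  using sum.union_disjoint[of S "- S" "\<lambda>i. cmod (x $ i)"] by (simp add: Un_commute)

lemma norm1_eq_sum_support:
  "norm1 x = (\<Sum>i\<in>{i. x $ i \<noteq> 0}. cmod (x $ i))"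
  unfolding norm1_def by (rule sum.mono_neutral_right) auto

lemma norm1_decrease_imp_cone:
  assumes "norm1 (x + h) \<le> norm1 x"
  defines "S \<equiv> {i. x $ i \<noteq> 0}"
  shows "(\<Sum>i\<in>-S. cmod (h $ i)) \<le> (\<Sum>i\<in>S. cmod (h $ i))"
proof -
  have off_support: "(\<Sum>i\<in>-S. cmod ((x + h) $ i)) = (\<Sum>i\<in>-S. cmod (h $ i))"
    by (rule sum.cong) (auto simp: S_def)
  have on_support: "(\<Sum>i\<in>S. cmod (x $ i) - cmod (h $ i)) \<le> (\<Sum>i\<in>S. cmod ((x + h) $ i))"
    by (intro sum_mono) (simp add: norm_diff_ineq)
  show ?thesis
    using assms(1) norm1_split[of "x + h" S] norm1_eq_sum_support[of x] on_support off_support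
    unfolding S_def sum_subtractf by linarith
qed

lemma sparse_norm1_bound:
  assumes "sparse k x" "norm1 (x + h) \<le> norm1 x" "\<And>i. cmod (h $ i) \<le> c"
  shows "norm1 h \<le> 2 * real k * c"
proof -
  define S where "S = {i. x $ i \<noteq> 0}"
  have "0 \<le> c" using assms(3) norm_ge_zero order_trans by blast
  have "(\<Sum>i\<in>S. cmod (h $ i)) \<le> real (card S) * c"
    using sum_mono[of S "\<lambda>i. cmod (h $ i)" "\<lambda>_. c"] assms(3) by simp
  also have "\<dots> \<le> real k * c"
    using assms(1) \<open>0 \<le> c\<close> unfolding sparse_def S_def by (intro mult_right_mono) auto
  finally show ?thesis
    using norm1_split[of h S] norm1_decrease_imp_cone[OF assms(2)] unfolding S_def by linarith
qed

lemma norm2_le_sqrt_norm_inf_norm1: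
  assumes "\<And>i. cmod (x $ i) \<le> c"
  shows "norm2 x \<le> sqrt (c * norm1 x)"
proof -
  have "(\<Sum>i\<in>UNIV. (cmod (x $ i))\<^sup>2) \<le> (\<Sum>i\<in>UNIV. c * cmod (x $ i))"
    by (rule sum_mono) (simp add: power2_eq_square assms mult_right_mono)
  then show ?thesis
    unfolding norm2_def norm1_def sum_distrib_left by (rule real_sqrt_le_mono)
qed

lemma dantzig_feasible_signal:
  assumes "y = F *v xhat + e" "norm_inf e \<le> \<eta>1" "norm_inf (conj_transpose F *v e) \<le> \<eta>2"
  shows "dantzig_feasible F y \<eta>1 \<eta>2 xhat"
proof -
  have "F *v xhat - y = - e" using assms(1) by simp
  then show ?thesis using assms unfolding dantzig_feasible_def by simp
qed

lemma dantzig_feasible_error_bound: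
  assumes "unitary F" "y = F *v xhat + e" "norm_inf (conj_transpose F *v e) \<le> \<eta>2"
    and "dantzig_feasible F y \<eta>1 \<eta>2 x"
  shows "cmod ((x - xhat) $ i) \<le> 2 * \<eta>2"
proof -
  define h where "h = x - xhat"
  define G where "G = conj_transpose F"
  have "y - F *v x = e - F *v h"
    unfolding h_def assms(2) by (simp add: matrix_vector_mult_diff_distrib)
  then have "G *v (y - F *v x) = G *v e - h"
    using unitary_conj_transpose_mult_cancel[OF assms(1)]
    unfolding G_def by (simp add: matrix_vector_mult_diff_distrib)
  then have residual: "cmod ((G *v e - h) $ i) \<le> \<eta>2"
    using assms(4) norm_inf_le_iff unfolding dantzig_feasible_def G_def by metis
  have noise: "cmod ((G *v e) $ i) \<le> \<eta>2"
    using assms(3) norm_inf_le_iff unfolding G_def by blast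
  have "cmod (h $ i) \<le> cmod ((G *v e) $ i) + cmod ((G *v e - h) $ i)"
    using norm_triangle_ineq4[of "(G *v e) $ i" "(G *v e - h) $ i"] by simp
  then show ?thesis using residual noise unfolding h_def by linarith
qed

theorem theorem4:
  fixes F :: "complex ^ 'n ^ 'n" and xhat e y xs :: "complex ^ 'n"
    and k :: nat and \<eta>1 \<eta>2 :: real
  assumes "unitary F"
    and "y = F *v xhat + e"
    and "sparse k xhat"
    and "norm_inf e \<le> \<eta>1"
    and "norm_inf (conj_transpose F *v e) \<le> \<eta>2"
    and "dantzig_solution F y \<eta>1 \<eta>2 xs"
  shows "norm1 (xs - xhat) \<le> 4 * real k * \<eta>2 \<and> norm2 (xs - xhat) \<le> 6 * sqrt (real k) * \<eta>2"
proof -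
  define h where "h = xs - xhat"
  have "norm1 (xhat + h) \<le> norm1 xhat"
    using assms(6) dantzig_feasible_signal[OF assms(2,4,5)]
    unfolding dantzig_solution_def h_def by simp
  moreover have h_bound: "cmod (h $ i) \<le> 2 * \<eta>2" for i
    using dantzig_feasible_error_bound[OF assms(1,2,5)] assms(6)
    unfolding dantzig_solution_def h_def by blast
  ultimately have l1: "norm1 h \<le> 4 * real k * \<eta>2"
    using sparse_norm1_bound[OF assms(3)] by fastforce
  have "0 \<le> \<eta>2" using assms(5) norm_inf_nonneg order_trans by blast
  have "norm2 h \<le> sqrt (2 * \<eta>2 * (4 * real k * \<eta>2))"
    using norm2_le_sqrt_norm_inf_norm1[OF h_bound] l1 \<open>0 \<le> \<eta>2\<close>
    by (meson mult_left_mono order_trans real_sqrt_le_mono zero_le_mult_iff zero_le_numeral)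
  also have "\<dots> = sqrt 8 * sqrt (real k) * \<eta>2"
    using \<open>0 \<le> \<eta>2\<close> by (simp add: real_sqrt_mult power2_eq_square[symmetric] mult_ac)
  also have "\<dots> \<le> 6 * sqrt (real k) * \<eta>2"
    using \<open>0 \<le> \<eta>2\<close> real_le_lsqrt[of 6 8] by (intro mult_right_mono) auto
  finally show ?thesis using l1 unfolding h_def by simp
qed

end
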